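(* Let $H=(v_1,\dots,v_6)$ be an embedded equilateral hexagon, considered up to translations and rotations, whose action-angle coordinates $(d_1,d_2,d_3,\theta_1,\theta_2,\theta_3)$ for the $T_{135}$ triangulation are defined. If $J(H)=(1,1)$, then $\theta_i\in(0,\pi)$ for all $i\in\{1,2,3\}$, and $\theta_1+\theta_2<\pi$, $\theta_1+\theta_3<\pi$, $\theta_2+\theta_3<\pi$.
   Context: An equilateral hexagon is an ordered 6-tuple $H=(v_1,\dots,v_6)$ in $\mathbb{R}^3$ with $\|v_i-v_{i+1}\|=1$ (indices mod 6), edges $e_i=[v_i,v_{i+1}]$, oriented $v_1\to v_2\to\cdots\to v_6\to v_1$; embedded means non-adjacent edges are disjoint and adjacent ones meet only at their common endpoint. Standard position: $v_1=0$, $v_3$ on the positive $x$-axis, $v_5$ in the $xy$-plane with positive $y$-coordinate. Action-angle coordinates ($T_{135}$ triangulation), defined when $v_1,v_3,v_5$ are not collinear and $0<d_i<2$: $d_1=\|v_3-v_1\|$, $d_2=\|v_5-v_3\|$, $d_3=\|v_1-v_5\|$; with $m_1,m_2,m_3$ the midpoints of $[v_1,v_3],[v_3,v_5],[v_5,v_1]$, $u_1,u_2,u_3$ the unit vectors in the $xy$-plane perpendicular to these segments pointing toward the opposite vertex of triangle $v_1v_3v_5$ (toward $v_5,v_1,v_3$ respectively), and $e_z=(0,0,1)$, the angles $\theta_i\in[0,2\pi)$ are determined by $v_{2i}=m_i+\tfrac12\sqrt{4-d_i^2}(\cos\theta_i\,u_i+\sin\theta_i\,e_z)$ (regular planar hexagon: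 all $\theta_i=\pi$). Joint Chirality-Curl: $curl(H)=\operatorname{sign}\big((v_3-v_1)\times(v_5-v_1)\cdot(v_2-v_1)\big)$. For $i=2,4,6$, $T_i$ is the open triangular disk with vertices $v_{i-1},v_i,v_{i+1}$, oriented by the right-hand rule (normal $(v_i-v_{i-1})\times(v_{i+1}-v_i)$), and $\Delta_i$ is the algebraic intersection number of $T_i$ with the oriented polygon $H$. Then $J(H)=(\Delta_2\Delta_4\Delta_6,\ \Delta_2^2\Delta_4^2\Delta_6^2\,curl(H))$. *)

theory Defs
  imports "HOL-Analysis.Analysis" "HOL-Analysis.Cross3"
begin

text \<open>A hexagon is a map v :: nat => real^3; only v 1, ..., v 6 matter.
  hv v i is the vertex with cyclic index i (indices taken mod 6, in 1..6).\<close>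

definition hv :: "(nat \<Rightarrow> real^3) \<Rightarrow> nat \<Rightarrow> real^3" where
  "hv v i = v (((i + 5) mod 6) + 1)"

definition hedge :: "(nat \<Rightarrow> real^3) \<Rightarrow> nat \<Rightarrow> (real^3) set" where
  "hedge v i = closed_segment (hv v i) (hv v (i + 1))"

definition equilateral_hexagon :: "(nat \<Rightarrow> real^3) \<Rightarrow> bool" where
  "equilateral_hexagon v \<longleftrightarrow> (\<forall>i\<in>{1..6}. dist (hv v i) (hv v (i + 1)) = 1)"

definition embedded_hexagon :: "(nat \<Rightarrow> real^3) \<Rightarrow> bool" where
  "embedded_hexagon v \<longleftrightarrow>
     (\<forall>i\<in>{1..6}. \<forall>j\<in>{1..6}. i \<noteq> j \<longrightarrow>
        (if j = i mod 6 + 1 then hedge v i \<inter> hedge v j = {hv v j}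
         else if i = j mod 6 + 1 then hedge v i \<inter> hedge v j = {hv v i}
         else hedge v i \<inter> hedge v j = {}))"

definition is_rotation3 :: "real^3^3 \<Rightarrow> bool" where
  "is_rotation3 R \<longleftrightarrow> orthogonal_matrix R \<and> det R = 1"

definition standard_position :: "(nat \<Rightarrow> real^3) \<Rightarrow> bool" where
  "standard_position v \<longleftrightarrow>
     hv v 1 = 0 \<and>
     (hv v 3) $ 1 > 0 \<and> (hv v 3) $ 2 = 0 \<and> (hv v 3) $ 3 = 0 \<and>
     (hv v 5) $ 3 = 0 \<and> (hv v 5) $ 2 > 0"

definition aa_d :: "(nat \<Rightarrow> real^3) \<Rightarrow> nat \<Rightarrow> real" where
  "aa_d v i = dist (hv v (2 * i - 1)) (hv v (2 * i + 1))"

definition aa_defined :: "(nat \<Rightarrow> real^3) \<Rightarrow> bool" where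
  "aa_defined v \<longleftrightarrow> \<not> collinear {hv v 1, hv v 3, hv v 5} \<and>
     (\<forall>i\<in>{1,2,3}. 0 < aa_d v i \<and> aa_d v i < 2)"

definition aa_m :: "(nat \<Rightarrow> real^3) \<Rightarrow> nat \<Rightarrow> real^3" where
  "aa_m v i = midpoint (hv v (2 * i - 1)) (hv v (2 * i + 1))"

definition aa_u :: "(nat \<Rightarrow> real^3) \<Rightarrow> nat \<Rightarrow> real^3" where
  "aa_u v i = (let w = hv v (2 * i + 1) - hv v (2 * i - 1);
                   c = (1 / norm w) *\<^sub>R vector [- (w $ 2), w $ 1, 0]
               in if c \<bullet> (hv v (2 * i + 3) - aa_m v i) > 0 then c else - c)"

definition e_z :: "real^3" where
  "e_z = vector [0, 0, 1]"

definition aa_theta :: "(nat \<Rightarrow> real^3) \<Rightarrow> nat \<Rightarrow> real" where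
  "aa_theta v i = (THE \<theta>. 0 \<le> \<theta> \<and> \<theta> < 2 * pi \<and>
      hv v (2 * i) = aa_m v i + (sqrt (4 - (aa_d v i)\<^sup>2) / 2) *\<^sub>R
                        (cos \<theta> *\<^sub>R aa_u v i + sin \<theta> *\<^sub>R e_z))"

definition curl :: "(nat \<Rightarrow> real^3) \<Rightarrow> real" where
  "curl v = sgn ((cross3 (hv v 3 - hv v 1) (hv v 5 - hv v 1)) \<bullet> (hv v 2 - hv v 1))"

definition open_triangle :: "real^3 \<Rightarrow> real^3 \<Rightarrow> real^3 \<Rightarrow> (real^3) set" where
  "open_triangle p q r = {a *\<^sub>R p + b *\<^sub>R q + c *\<^sub>R r | a b c.
       0 < a \<and> 0 < b \<and> 0 < c \<and> a + b + c = 1}"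

text \<open>Signed contribution of the oriented segment a -> b crossing the open triangle
  T = open_triangle p q r (normal (q - p) x (r - q)).  Segments parallel to the
  plane of T contribute 0; a transverse crossing at an interior point of the
  segment contributes the sign of (b - a) . normal; a crossing at an endpoint of the
  segment (a vertex of the polygon lying in T) contributes half that sign, so that
  the two edges at such a vertex together contribute the correct local index.\<close>
definition cross_contrib :: "real^3 \<Rightarrow> real^3 \<Rightarrow> real^3 \<Rightarrow> real^3 \<Rightarrow> real^3 \<Rightarrow> real" where
  "cross_contrib p q r a b =
     (let n = cross3 (q - p) (r - q); d = (b - a) \<bullet> n in
      if d = 0 then 0 else
      (let s = ((p - a) \<bullet> n) / d; x = a + s *\<^sub>R (b - a) in
       if x \<in> open_triangle p q r then
         (if 0 < s \<and> s < 1 then sgn d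
          else if s = 0 \<or> s = 1 then sgn d / 2 else 0)
       else 0))"

text \<open>Delta_i: algebraic intersection number of T_i (vertices v_(i-1), v_i, v_(i+1))
  with the oriented polygon.\<close>
definition Delta :: "(nat \<Rightarrow> real^3) \<Rightarrow> nat \<Rightarrow> real" where
  "Delta v i = (\<Sum>j = 1..6. cross_contrib (hv v (i + 5)) (hv v i) (hv v (i + 1))
                                           (hv v j) (hv v (j + 1)))"

definition JCC :: "(nat \<Rightarrow> real^3) \<Rightarrow> real \<times> real" where
  "JCC v = (Delta v 2 * Delta v 4 * Delta v 6,
            (Delta v 2)\<^sup>2 * (Delta v 4)\<^sup>2 * (Delta v 6)\<^sup>2 * curl v)"

end

theory Submission
  imports Defs
begin

(* After the rigid motion the base triangle v1 v3 v5 lies counterclockwise in the xy-plane, and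
   each of v2, v4, v6 is a flap over one of its sides whose height has the sign of sin theta_i.
   J(H) = (1,1) forces curl(H) = 1, i.e. v2 lies above the plane, and Delta_2, Delta_4, Delta_6 to be
   nonzero, so each T_i is met by one of the two edges of H not incident to it. Such an edge joins a
   base vertex to a flap, and that flap lies above the plane whenever the flap of T_i does. Two
   adjacent triangles are never met by each other's edges (their common base vertex would lie in the
   plane through the two other base vertices and a flap), so, starting from v2, all crossings run
   the same way round the hexagon and every theta_i lies in (0, pi). Finally, each crossing gives a
   common point of two adjacent flap wedges at their shared base vertex; comparing its coordinates
   in both wedges yields sin (theta_i + theta_j) > 0, i.e. theta_i + theta_j < pi. *)

section \<open>Rigid motions\<close>

lemma rotation_inner:
  "is_rotation3 R \<Longrightarrow> (R *v x) \<bullet> (R *v y) = x \<bullet> y"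
  using orthogonal_transformation_matrix[of "(*v) R"]
  by (simp add: is_rotation3_def orthogonal_transformation_def)

lemma rotation_cross3:
  "is_rotation3 R \<Longrightarrow> cross3 (R *v x) (R *v y) = R *v cross3 x y"
  by (simp add: cross_rotation_matrix is_rotation3_def rotation_matrix_def)

lemma rotation_inj:
  "is_rotation3 R \<Longrightarrow> R *v x = R *v y \<longleftrightarrow> x = y"
  using orthogonal_transformation_inj[of "(*v) R"] orthogonal_transformation_matrix[of "(*v) R"]
  by (auto simp: is_rotation3_def inj_def)

lemma rigid_motion_diff: "(R *v x + t) - (R *v y + t) = R *v (x - y)" for R :: "real^3^3"
  by (simp add: matrix_vector_mult_diff_distrib)

lemma rigid_motion_affine_comb3:
  fixes R :: "real^3^3"
  shows "a + b + c = 1 \<Longrightarrow>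
   a *\<^sub>R (R *v p + t) + b *\<^sub>R (R *v q + t) + c *\<^sub>R (R *v r + t) = R *v (a *\<^sub>R p + b *\<^sub>R q + c *\<^sub>R r) + t"
  by (simp add: matrix_vector_right_distrib matrix_vector_mult_scaleR algebra_simps flip: scaleR_add_left)

lemma open_triangle_rigid_motion:
  assumes "is_rotation3 R"
  shows "R *v x + t \<in> open_triangle (R *v p + t) (R *v q + t) (R *v r + t) \<longleftrightarrow> x \<in> open_triangle p q r"
proof -
  have "R *v x + t = a *\<^sub>R (R *v p + t) + b *\<^sub>R (R *v q + t) + c *\<^sub>R (R *v r + t)
      \<longleftrightarrow> x = a *\<^sub>R p + b *\<^sub>R q + c *\<^sub>R r" if "a + b + c = 1" for a b c
    by (simp add: rigid_motion_affine_comb3[OF that] rotation_inj[OF assms])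
  then show ?thesis
    unfolding open_triangle_def mem_Collect_eq by (intro ex_cong1) auto
qed

lemma cross_contrib_rigid_motion:
  assumes "is_rotation3 R"
  shows "cross_contrib (R *v p + t) (R *v q + t) (R *v r + t) (R *v a + t) (R *v b + t)
       = cross_contrib p q r a b"
proof -
  have "(R *v a + t) + s *\<^sub>R (R *v (b - a)) = R *v (a + s *\<^sub>R (b - a)) + t" for s
    by (simp add: matrix_vector_right_distrib matrix_vector_mult_scaleR)
  then show ?thesis
    unfolding cross_contrib_def Let_def rigid_motion_diff
    by (simp only: rotation_cross3[OF assms] rotation_inner[OF assms] open_triangle_rigid_motion[OF assms])
qed

lemma JCC_rigid_motion:
  assumes "is_rotation3 R"
  shows "JCC (\<lambda>j. R *v v j + t) = JCC v"
proof -
  have "curl (\<lambda>j. R *v v j + t) = curl v"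
    unfolding curl_def hv_def rigid_motion_diff
    by (simp only: rotation_cross3[OF assms] rotation_inner[OF assms])
  moreover have "Delta (\<lambda>j. R *v v j + t) i = Delta v i" for i
    unfolding Delta_def hv_def using cross_contrib_rigid_motion[OF assms] by simp
  ultimately show ?thesis
    unfolding JCC_def by simp
qed

lemma equilateral_hexagon_rigid_motion:
  assumes "is_rotation3 R" and "equilateral_hexagon v"
  shows "equilateral_hexagon (\<lambda>j. R *v v j + t)"
proof -
  have "dist (R *v x + t) (R *v y + t) = dist x y" for x y
    using rotation_inner[OF assms(1), of "x - y" "x - y"]
    by (simp add: dist_norm rigid_motion_diff norm_eq_sqrt_inner matrix_vector_mult_diff_distrib)
  with assms(2) show ?thesis
    unfolding equilateral_hexagon_def hv_def by simp
qed

section \<open>Edges crossing the triangles \<open>T\<^sub>i\<close>\<close>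

lemma hv_eval:
  "hv v 1 = v 1" "hv v 2 = v 2" "hv v 3 = v 3" "hv v 4 = v 4" "hv v 5 = v 5" "hv v 6 = v 6"
  "hv v 7 = v 1" "hv v 8 = v 2" "hv v 9 = v 3" "hv v 10 = v 4" "hv v 11 = v 5"
  unfolding hv_def by (simp_all add: Suc_numeral) (simp_all add: numeral_2_eq_2)

lemma open_triangle_commute: "open_triangle p q r = open_triangle r q p"
  unfolding open_triangle_def by (auto 4 5 simp: ac_simps)

lemma first_vertex_notin_open_triangle:
  assumes "cross3 (q - p) (r - q) \<noteq> 0"
  shows "p \<notin> open_triangle p q r"
proof
  assume "p \<in> open_triangle p q r"
  then obtain b c where "0 < b" "p = (1 - b - c) *\<^sub>R p + b *\<^sub>R q + c *\<^sub>R r"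
    unfolding open_triangle_def by (smt (verit) mem_Collect_eq)
  then have "b *\<^sub>R (q - p) = - c *\<^sub>R (r - p)"
    by (simp add: algebra_simps)
  then have "b *\<^sub>R cross3 (q - p) (r - p) = - c *\<^sub>R cross3 (r - p) (r - p)"
    by (simp only: cross_mult_left flip: cross_mult_left)
  moreover have "cross3 (q - p) (r - q) = cross3 (q - p) (r - p)"
    by (simp add: cross3_simps)
  ultimately show False
    using assms \<open>0 < b\<close> by simp
qed

lemma last_vertex_notin_open_triangle:
  assumes "cross3 (q - p) (r - q) \<noteq> 0"
  shows "r \<notin> open_triangle p q r"
proof -
  have "cross3 (q - r) (p - q) = - cross3 (q - p) (r - q)"
    by (simp add: cross3_simps)
  then show ?thesis
    using first_vertex_notin_open_triangle[of q r p] assms open_triangle_commute by auto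
qed

lemma cross_contrib_triangle_edges:
  "cross_contrib p q r p q = 0" "cross_contrib p q r q r = 0"
  unfolding cross_contrib_def Let_def by (simp_all add: dot_cross_self)

lemma cross_contrib_edge_from_last_vertex: "cross_contrib p q r r b = 0"
proof (cases "cross3 (q - p) (r - q) = 0")
  case False
  have "p - r = - ((q - p) + (r - q))"
    by simp
  then have "(p - r) \<bullet> cross3 (q - p) (r - q) = 0"
    by (simp only: inner_minus_left inner_add_left dot_cross_self add_0 neg_0_equal_iff_equal)
  with False show ?thesis
    unfolding cross_contrib_def Let_def using last_vertex_notin_open_triangle by simp
qed (simp add: cross_contrib_def)

lemma cross_contrib_edge_to_first_vertex: "cross_contrib p q r a p = 0"
proof (cases "(p - a) \<bullet> cross3 (q - p) (r - q) = 0")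
  case False
  then have "cross3 (q - p) (r - q) \<noteq> 0"
    by auto
  with False show ?thesis
    unfolding cross_contrib_def Let_def using first_vertex_notin_open_triangle by simp
qed (simp add: cross_contrib_def)

lemma cross_contrib_nonzero_imp_crossing:
  assumes "cross_contrib p q r a b \<noteq> 0"
  shows "closed_segment a b \<inter> open_triangle p q r \<noteq> {}"
proof -
  define n where "n = cross3 (q - p) (r - q)"
  define s where "s = ((p - a) \<bullet> n) / ((b - a) \<bullet> n)"
  have "cross_contrib p q r a b = (if (b - a) \<bullet> n = 0 then 0 else
      if a + s *\<^sub>R (b - a) \<in> open_triangle p q r then
        (if 0 < s \<and> s < 1 then sgn ((b - a) \<bullet> n)
         else if s = 0 \<or> s = 1 then sgn ((b - a) \<bullet> n) / 2 else 0)
      else 0)"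
    unfolding cross_contrib_def Let_def n_def s_def by simp
  then have "0 \<le> s" "s \<le> 1" "a + s *\<^sub>R (b - a) \<in> open_triangle p q r"
    using assms by (auto split: if_splits)
  moreover have "a + s *\<^sub>R (b - a) \<in> closed_segment a b"
    unfolding in_segment using \<open>0 \<le> s\<close> \<open>s \<le> 1\<close> by (auto simp: algebra_simps)
  ultimately show ?thesis
    by blast
qed

lemma sum_atLeast1_atMost6: "sum f {1..6::nat} = f 1 + f 2 + f 3 + f 4 + f 5 + f 6"
  by (simp add: numeral_eq_Suc atLeastAtMostSuc_conv add_ac)

lemma Delta_nonzero_imp_crossing:
  assumes "i \<in> {2, 4, 6}" and "Delta v i \<noteq> 0"
  shows "hedge v (i + 2) \<inter> open_triangle (hv v (i + 5)) (hv v i) (hv v (i + 1)) \<noteq> {}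
       \<or> hedge v (i + 3) \<inter> open_triangle (hv v (i + 5)) (hv v i) (hv v (i + 1)) \<noteq> {}"
proof -
  have "Delta v i = cross_contrib (hv v (i + 5)) (hv v i) (hv v (i + 1)) (hv v (i + 2)) (hv v (i + 3))
                  + cross_contrib (hv v (i + 5)) (hv v i) (hv v (i + 1)) (hv v (i + 3)) (hv v (i + 4))"
    using assms(1) unfolding Delta_def sum_atLeast1_atMost6
    by (elim insertE emptyE)
      (simp_all add: hv_def cross_contrib_triangle_edges
        cross_contrib_edge_from_last_vertex cross_contrib_edge_to_first_vertex)
  then have "cross_contrib (hv v (i + 5)) (hv v i) (hv v (i + 1)) (hv v (i + 2)) (hv v (i + 3)) \<noteq> 0
      \<or> cross_contrib (hv v (i + 5)) (hv v i) (hv v (i + 1)) (hv v (i + 3)) (hv v (i + 4)) \<noteq> 0"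
    using assms(2) by auto
  moreover have "i + 2 + 1 = i + 3" "i + 3 + 1 = i + 4"
    by simp_all
  ultimately show ?thesis
    unfolding hedge_def using cross_contrib_nonzero_imp_crossing by metis
qed

lemma JCC_eq_1_1D:
  assumes "JCC v = (1, 1)"
  shows "curl v = 1" "Delta v 2 \<noteq> 0" "Delta v 4 \<noteq> 0" "Delta v 6 \<noteq> 0"
proof -
  have product: "Delta v 2 * Delta v 4 * Delta v 6 = 1"
    and squares: "(Delta v 2)\<^sup>2 * (Delta v 4)\<^sup>2 * (Delta v 6)\<^sup>2 * curl v = 1"
    using assms unfolding JCC_def by simp_all
  have "curl v = (Delta v 2 * Delta v 4 * Delta v 6)\<^sup>2 * curl v"
    using product by simp
  also have "\<dots> = 1"
    using squares by (simp add: power_mult_distrib)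
  finally show "curl v = 1" .
  show "Delta v 2 \<noteq> 0" "Delta v 4 \<noteq> 0" "Delta v 6 \<noteq> 0"
    using product by auto
qed

lemma in_open_triangle_relative:
  assumes "X \<in> open_triangle P F Q"
  obtains a b where "0 < a" "0 < b" "X - Q = a *\<^sub>R (P - Q) + b *\<^sub>R (F - Q)"
proof -
  obtain a b c where "0 < a" "0 < b" "a + b + c = 1" "X = a *\<^sub>R P + b *\<^sub>R F + c *\<^sub>R Q"
    using assms unfolding open_triangle_def by blast
  then have "X - Q = a *\<^sub>R (P - Q) + b *\<^sub>R (F - Q)"
    by (simp add: algebra_simps flip: scaleR_add_left)
  with that \<open>0 < a\<close> \<open>0 < b\<close> show ?thesis .
qed

lemma in_closed_segment_relative:
  assumes "X \<in> closed_segment U V"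
  obtains u where "0 \<le> u" "u \<le> 1" "X - Q = (1 - u) *\<^sub>R (U - Q) + u *\<^sub>R (V - Q)"
proof -
  obtain u where "0 \<le> u" "u \<le> 1" "X = (1 - u) *\<^sub>R U + u *\<^sub>R V"
    using assms unfolding in_segment by blast
  moreover from this have "X - Q = (1 - u) *\<^sub>R (U - Q) + u *\<^sub>R (V - Q)"
    by (simp add: algebra_simps)
  ultimately show ?thesis
    using that by blast
qed

section \<open>Flaps over a segment in the \<open>xy\<close>-plane\<close>

lemma e_z_components [simp]: "e_z $ 1 = 0" "e_z $ 2 = 0" "e_z $ 3 = 1"
  by (simp_all add: e_z_def)

lemma inner_vec3: "x \<bullet> y = x $ 1 * y $ 1 + x $ 2 * y $ 2 + x $ 3 * y $ 3" for x y :: "real^3"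
  by (simp add: inner_vec_def sum_3)

lemma norm_square_vec3: "(norm x)\<^sup>2 = (x $ 1)\<^sup>2 + (x $ 2)\<^sup>2 + (x $ 3)\<^sup>2" for x :: "real^3"
  unfolding power2_norm_eq_inner by (simp add: inner_vec_def sum_3 power2_eq_square)

lemma norm_e_z [simp]: "norm e_z = 1"
  by (simp add: norm_eq_sqrt_inner inner_vec3)

lemma midpoint_minus_left: "midpoint a b - a = (1/2) *\<^sub>R (b - a)"
  and midpoint_minus_right: "midpoint a b - b = (1/2) *\<^sub>R (a - b)"
  for a b :: "'a::real_vector"
  by (simp_all add: midpoint_def algebra_simps) (simp_all flip: scaleR_add_left)

lemma isosceles_apex:
  fixes F P Q :: "'a::real_inner"
  assumes "dist F P = 1" and "dist F Q = 1"
  shows "(F - midpoint P Q) \<bullet> (Q - P) = 0"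
    and "norm (F - midpoint P Q) = sqrt (4 - (dist P Q)\<^sup>2) / 2"
proof -
  define Y where "Y = F - midpoint P Q"
  have "F - P = Y + (1/2) *\<^sub>R (Q - P)" "F - Q = Y - (1/2) *\<^sub>R (Q - P)"
    unfolding Y_def midpoint_def by (simp_all add: algebra_simps) (simp_all flip: scaleR_add_left)
  then have "(norm (F - P))\<^sup>2 = (norm Y)\<^sup>2 + Y \<bullet> (Q - P) + (norm (Q - P))\<^sup>2 / 4"
    "(norm (F - Q))\<^sup>2 = (norm Y)\<^sup>2 - Y \<bullet> (Q - P) + (norm (Q - P))\<^sup>2 / 4"
    by (simp_all only: power2_norm_eq_inner) (simp_all add: algebra_simps inner_commute add_divide_distrib diff_divide_distrib)
  moreover have "norm (F - P) = 1" "norm (F - Q) = 1" "norm (Q - P) = dist P Q"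
    using assms by (simp_all add: dist_norm norm_minus_commute)
  ultimately have "Y \<bullet> (Q - P) = 0" "(norm Y)\<^sup>2 = (4 - (dist P Q)\<^sup>2) / 4"
    by (simp_all add: field_simps)
  then show "(F - midpoint P Q) \<bullet> (Q - P) = 0" "norm (F - midpoint P Q) = sqrt (4 - (dist P Q)\<^sup>2) / 2"
    unfolding Y_def by (simp_all add: real_sqrt_divide flip: real_sqrt_unique)
qed

lemma angle_eq_of_sin_cos_eq:
  fixes x y :: real
  assumes "0 \<le> x" "x < 2 * pi" "0 \<le> y" "y < 2 * pi" and "sin x = sin y" "cos x = cos y"
  shows "x = y"
proof -
  obtain k :: int where k: "x = y + 2 * pi * k"
    using sin_cos_eq_iff assms(5,6) by metis
  with assms(1-4) have "\<bar>2 * pi * k\<bar> < 2 * pi"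
    by auto
  then have "\<bar>real_of_int k\<bar> < 1"
    by (simp add: abs_mult)
  then show ?thesis
    using k by simp
qed

lemma unique_polar_angle:
  fixes u e Y :: "'a::real_inner"
  assumes "norm u = 1" "norm e = 1" "u \<bullet> e = 0" "0 < h"
    and Y: "Y = (Y \<bullet> u) *\<^sub>R u + (Y \<bullet> e) *\<^sub>R e" and "norm Y = h"
  shows "\<exists>!\<theta>. 0 \<le> \<theta> \<and> \<theta> < 2 * pi \<and> Y = h *\<^sub>R (cos \<theta> *\<^sub>R u + sin \<theta> *\<^sub>R e)"
proof -
  have inner_polar: "(h *\<^sub>R (c *\<^sub>R u + s *\<^sub>R e)) \<bullet> u = h * c"
    "(h *\<^sub>R (c *\<^sub>R u + s *\<^sub>R e)) \<bullet> e = h * s" for c s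
    using assms(1-3) by (simp_all add: algebra_simps inner_commute norm_eq_1)
  have "h\<^sup>2 = Y \<bullet> ((Y \<bullet> u) *\<^sub>R u + (Y \<bullet> e) *\<^sub>R e)"
    using \<open>norm Y = h\<close> Y by (metis power2_norm_eq_inner)
  then have "(Y \<bullet> u)\<^sup>2 + (Y \<bullet> e)\<^sup>2 = h\<^sup>2"
    by (simp add: inner_add_right power2_eq_square)
  then have "(Y \<bullet> u / h)\<^sup>2 + (Y \<bullet> e / h)\<^sup>2 = 1"
    using \<open>0 < h\<close> by (simp add: power_divide flip: add_divide_distrib)
  then obtain \<theta> where \<theta>: "0 \<le> \<theta>" "\<theta> < 2 * pi" "Y \<bullet> u / h = cos \<theta>" "Y \<bullet> e / h = sin \<theta>"
    using sincos_total_2pi by metis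
  then have Y\<theta>: "Y \<bullet> u = h * cos \<theta>" "Y \<bullet> e = h * sin \<theta>"
    using \<open>0 < h\<close> by (simp_all add: field_simps)
  then have "Y = h *\<^sub>R (cos \<theta> *\<^sub>R u + sin \<theta> *\<^sub>R e)"
    using Y by (simp add: scaleR_add_right)
  moreover have "\<phi> = \<theta>" if "0 \<le> \<phi>" "\<phi> < 2 * pi" "Y = h *\<^sub>R (cos \<phi> *\<^sub>R u + sin \<phi> *\<^sub>R e)" for \<phi>
  proof -
    have "Y \<bullet> u = h * cos \<phi>" "Y \<bullet> e = h * sin \<phi>"
      unfolding that(3) by (fact inner_polar)+
    with Y\<theta> have "h * sin \<phi> = h * sin \<theta>" "h * cos \<phi> = h * cos \<theta>"
      by linarith+
    with \<open>0 < h\<close> show ?thesis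
      by (intro angle_eq_of_sin_cos_eq[OF that(1,2) \<theta>(1,2)]) simp_all
  qed
  ultimately show ?thesis
    using \<theta>(1,2) by blast
qed

definition left_unit_normal :: "real^3 \<Rightarrow> real^3 \<Rightarrow> real^3" where
  "left_unit_normal P Q = (1 / norm (Q - P)) *\<^sub>R vector [- ((Q - P) $ 2), (Q - P) $ 1, 0]"

lemma left_unit_normal_components:
  "left_unit_normal P Q $ 1 = - (Q - P) $ 2 / norm (Q - P)"
  "left_unit_normal P Q $ 2 = (Q - P) $ 1 / norm (Q - P)"
  "left_unit_normal P Q $ 3 = 0"
  by (simp_all add: left_unit_normal_def)

lemma left_unit_normal_orthonormal:
  assumes "P $ 3 = 0" "Q $ 3 = 0" "P \<noteq> Q"
  shows "norm (left_unit_normal P Q) = 1" "left_unit_normal P Q \<bullet> e_z = 0"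
proof -
  define W where "W = Q - P"
  define N where "N = norm W"
  have N: "N\<^sup>2 = (W $ 1)\<^sup>2 + (W $ 2)\<^sup>2" "N \<noteq> 0"
    unfolding N_def norm_square_vec3 using assms by (simp_all add: W_def)
  have "(norm (left_unit_normal P Q))\<^sup>2 = ((W $ 2)\<^sup>2 + (W $ 1)\<^sup>2) / N\<^sup>2"
    by (simp add: norm_square_vec3 left_unit_normal_components power_divide add_divide_distrib
        flip: W_def N_def)
  also have "\<dots> = N\<^sup>2 / N\<^sup>2"
    using N(1) by (simp only: add.commute)
  also have "\<dots> = 1"
    using N(2) by simp
  finally show "norm (left_unit_normal P Q) = 1"
    using power2_eq_1_iff[of "norm (left_unit_normal P Q)"] norm_ge_zero[of "left_unit_normal P Q"]
    by force
  show "left_unit_normal P Q \<bullet> e_z = 0"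
    by (simp add: inner_vec3 left_unit_normal_components)
qed

lemma horizontal_orthogonal_decomposition:
  assumes "P $ 3 = 0" "Q $ 3 = 0" "P \<noteq> Q" and "Y \<bullet> (Q - P) = 0"
  shows "Y = (Y \<bullet> left_unit_normal P Q) *\<^sub>R left_unit_normal P Q + (Y \<bullet> e_z) *\<^sub>R e_z"
proof -
  define W where "W = Q - P"
  define N where "N = norm W"
  have N: "N * N = W $ 1 * W $ 1 + W $ 2 * W $ 2" "N \<noteq> 0"
    unfolding N_def power2_eq_square[symmetric] norm_square_vec3 using assms(1-3) by (simp_all add: W_def)
  have YW: "Y $ 1 * W $ 1 + Y $ 2 * W $ 2 = 0"
    using assms unfolding W_def inner_vec3 by simp
  have "Y $ 1 = ((Y \<bullet> left_unit_normal P Q) *\<^sub>R left_unit_normal P Q + (Y \<bullet> e_z) *\<^sub>R e_z) $ 1"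
    "Y $ 2 = ((Y \<bullet> left_unit_normal P Q) *\<^sub>R left_unit_normal P Q + (Y \<bullet> e_z) *\<^sub>R e_z) $ 2"
    by (simp_all add: inner_vec3 left_unit_normal_components field_simps N(2) flip: W_def N_def)
      (use N(1) YW in algebra)+
  moreover have "Y $ 3 = ((Y \<bullet> left_unit_normal P Q) *\<^sub>R left_unit_normal P Q + (Y \<bullet> e_z) *\<^sub>R e_z) $ 3"
    by (simp add: inner_vec3 left_unit_normal_components)
  ultimately show ?thesis
    unfolding vec_eq_iff forall_3 by simp
qed

definition flap :: "real^3 \<Rightarrow> real^3 \<Rightarrow> real \<Rightarrow> real^3" where
  "flap P Q \<theta> = midpoint P Q + (sqrt (4 - (dist P Q)\<^sup>2) / 2) *\<^sub>R
                                  (cos \<theta> *\<^sub>R left_unit_normal P Q + sin \<theta> *\<^sub>R e_z)"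

lemma flap_radius_pos: "dist P Q < 2 \<Longrightarrow> 0 < sqrt (4 - (dist P Q)\<^sup>2) / 2"
  using power_strict_mono[of "dist P Q" 2 2] by simp

lemma flap_angle_unique:
  assumes "P $ 3 = 0" "Q $ 3 = 0" "0 < dist P Q" "dist P Q < 2" and "dist F P = 1" "dist F Q = 1"
  shows "\<exists>!\<theta>. 0 \<le> \<theta> \<and> \<theta> < 2 * pi \<and> F = flap P Q \<theta>"
proof -
  define h where "h = sqrt (4 - (dist P Q)\<^sup>2) / 2"
  have "P \<noteq> Q"
    using assms(3) by simp
  have "\<exists>!\<theta>. 0 \<le> \<theta> \<and> \<theta> < 2 * pi \<and>
      F - midpoint P Q = h *\<^sub>R (cos \<theta> *\<^sub>R left_unit_normal P Q + sin \<theta> *\<^sub>R e_z)"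
  proof (rule unique_polar_angle)
    show "norm (left_unit_normal P Q) = 1" "left_unit_normal P Q \<bullet> e_z = 0"
      using left_unit_normal_orthonormal[OF assms(1,2) \<open>P \<noteq> Q\<close>] by simp_all
    show "0 < h"
      unfolding h_def using flap_radius_pos[OF assms(4)] .
    show "F - midpoint P Q = ((F - midpoint P Q) \<bullet> left_unit_normal P Q) *\<^sub>R left_unit_normal P Q
        + ((F - midpoint P Q) \<bullet> e_z) *\<^sub>R e_z"
      using horizontal_orthogonal_decomposition[OF assms(1,2) \<open>P \<noteq> Q\<close>] isosceles_apex(1)[OF assms(5,6)] .
    show "norm (F - midpoint P Q) = h"
      unfolding h_def using isosceles_apex(2)[OF assms(5,6)] .
  qed simp
  moreover have "F = flap P Q \<theta> \<longleftrightarrow>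
      F - midpoint P Q = h *\<^sub>R (cos \<theta> *\<^sub>R left_unit_normal P Q + sin \<theta> *\<^sub>R e_z)" for \<theta>
    unfolding flap_def h_def by (auto simp: algebra_simps)
  ultimately show ?thesis
    by simp
qed

lemma flap_height: "P $ 3 = 0 \<Longrightarrow> Q $ 3 = 0 \<Longrightarrow> flap P Q \<theta> $ 3 = sqrt (4 - (dist P Q)\<^sup>2) / 2 * sin \<theta>"
  by (simp add: flap_def midpoint_def left_unit_normal_components)

lemma flap_height_pos_iff:
  "P $ 3 = 0 \<Longrightarrow> Q $ 3 = 0 \<Longrightarrow> dist P Q < 2 \<Longrightarrow> 0 < flap P Q \<theta> $ 3 \<longleftrightarrow> 0 < sin \<theta>"
  using flap_radius_pos[of P Q] by (simp add: flap_height zero_less_mult_iff)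

section \<open>Flaps over a counterclockwise triangle\<close>

definition ccw_in_xy_plane :: "real^3 \<Rightarrow> real^3 \<Rightarrow> real^3 \<Rightarrow> bool" where
  "ccw_in_xy_plane P Q R \<longleftrightarrow> P $ 3 = 0 \<and> Q $ 3 = 0 \<and> R $ 3 = 0 \<and> 0 < cross3 (Q - P) (R - Q) $ 3"

lemma ccw_in_xy_plane_rotate: "ccw_in_xy_plane P Q R \<Longrightarrow> ccw_in_xy_plane Q R P"
  unfolding ccw_in_xy_plane_def by (simp add: cross_components algebra_simps)

lemma ccw_in_xy_plane_dist_pos: "ccw_in_xy_plane P Q R \<Longrightarrow> 0 < dist P Q"
  unfolding ccw_in_xy_plane_def by auto

lemma ccw_in_xy_plane_sgn_triple_product:
  assumes "ccw_in_xy_plane A B C"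
  shows "sgn (cross3 (B - A) (C - A) \<bullet> (F - A)) = sgn (F $ 3)"
proof -
  have "cross3 (B - A) (C - A) \<bullet> (F - A) = cross3 (B - A) (C - B) $ 3 * F $ 3"
    using assms unfolding ccw_in_xy_plane_def by (simp add: inner_vec3 cross_components algebra_simps)
  with assms show ?thesis
    unfolding ccw_in_xy_plane_def by (simp add: sgn_mult)
qed

lemma left_unit_normal_toward_third_vertex:
  assumes "ccw_in_xy_plane P Q R"
  shows "0 < left_unit_normal P Q \<bullet> (R - midpoint P Q)"
proof -
  have "0 < norm (Q - P)"
    using ccw_in_xy_plane_dist_pos[OF assms] by (simp add: dist_norm norm_minus_commute)
  then have "left_unit_normal P Q \<bullet> (R - midpoint P Q) = cross3 (Q - P) (R - Q) $ 3 / norm (Q - P)"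
    by (simp add: inner_vec3 left_unit_normal_components cross_components midpoint_def field_simps)
  with assms \<open>0 < norm (Q - P)\<close> show ?thesis
    unfolding ccw_in_xy_plane_def by simp
qed

lemma ccw_vertex_notin_affine_hull:
  assumes "ccw_in_xy_plane P Q R" and "F $ 3 \<noteq> 0"
  shows "Q \<notin> affine hull {P, R, F}"
proof
  assume "Q \<in> affine hull {P, R, F}"
  then obtain u v w where "u + v + w = 1" and Q: "Q = u *\<^sub>R P + v *\<^sub>R R + w *\<^sub>R F"
    unfolding affine_hull_3 by blast
  have "w = 0"
    using arg_cong[OF Q, of "\<lambda>x. x $ 3"] assms unfolding ccw_in_xy_plane_def by simp
  with \<open>u + v + w = 1\<close> Q have "Q = (1 - v) *\<^sub>R P + v *\<^sub>R R"
    by (simp add: eq_diff_eq)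
  then have "Q - P = v *\<^sub>R (R - P)" "R - Q = (1 - v) *\<^sub>R (R - P)"
    by (simp_all add: algebra_simps)
  then have "cross3 (Q - P) (R - Q) = 0"
    by (simp add: cross_mult_left cross_mult_right)
  with assms(1) show False
    unfolding ccw_in_xy_plane_def by simp
qed

lemma crossing_height_pos:
  assumes "P $ 3 = 0" "Q $ 3 = 0" "R $ 3 = 0" "0 < F $ 3"
    and "closed_segment R G \<inter> open_triangle P F Q \<noteq> {}"
  shows "0 < G $ 3"
proof -
  obtain X where "X \<in> closed_segment R G" "X \<in> open_triangle P F Q"
    using assms(5) by blast
  then obtain s a b c where "0 \<le> s" "0 < b"
    and X: "a *\<^sub>R P + b *\<^sub>R F + c *\<^sub>R Q = (1 - s) *\<^sub>R R + s *\<^sub>R G"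
    unfolding open_triangle_def in_segment by auto
  have "s * G $ 3 = b * F $ 3"
    using arg_cong[OF X, of "\<lambda>x. x $ 3"] assms(1-3) by simp
  with \<open>0 < b\<close> \<open>0 < F $ 3\<close> have "0 < s * G $ 3"
    by simp
  with \<open>0 \<le> s\<close> show ?thesis
    by (auto simp: zero_less_mult_iff)
qed

lemma linked_crossings_impossible:
  assumes "Q \<notin> affine hull {P, R, F}"
    and "closed_segment G R \<inter> open_triangle P F Q \<noteq> {}"
  shows "closed_segment P F \<inter> open_triangle Q G R = {}"
proof (rule ccontr)
  assume "closed_segment P F \<inter> open_triangle Q G R \<noteq> {}"
  then obtain Y where "Y \<in> closed_segment P F" "Y \<in> open_triangle Q G R"
    by blast
  then obtain t a' b' c' where "0 < a'" "0 < b'" "0 < c'" "a' + b' + c' = 1"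
    and E2: "a' *\<^sub>R Q + b' *\<^sub>R G + c' *\<^sub>R R = (1 - t) *\<^sub>R P + t *\<^sub>R F"
    unfolding open_triangle_def in_segment by auto
  obtain X where "X \<in> closed_segment G R" "X \<in> open_triangle P F Q"
    using assms(2) by blast
  then obtain s a b c where "s \<le> 1" "0 < a" "0 < b" "0 < c" "a + b + c = 1"
    and E1: "a *\<^sub>R P + b *\<^sub>R F + c *\<^sub>R Q = (1 - s) *\<^sub>R G + s *\<^sub>R R"
    unfolding open_triangle_def in_segment by auto
  define \<kappa> where "\<kappa> = b' * c + (1 - s) * a'"
  define \<alpha> where "\<alpha> = (1 - s) * (1 - t) - b' * a"
  define \<beta> where "\<beta> = b' * s - (1 - s) * c'"
  define \<gamma> where "\<gamma> = (1 - s) * t - b' * b"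
  \<comment> \<open>eliminating \<open>G\<close> between the two crossing points exhibits \<open>Q\<close> as an affine
      combination of \<open>P\<close>, \<open>R\<close>, \<open>F\<close>\<close>
  have "b' *\<^sub>R (a *\<^sub>R P + b *\<^sub>R F + c *\<^sub>R Q) - (1 - s) *\<^sub>R ((1 - t) *\<^sub>R P + t *\<^sub>R F)
      = b' *\<^sub>R ((1 - s) *\<^sub>R G + s *\<^sub>R R) - (1 - s) *\<^sub>R (a' *\<^sub>R Q + b' *\<^sub>R G + c' *\<^sub>R R)"
    by (simp only: E1 flip: E2)
  then have combination: "\<kappa> *\<^sub>R Q = \<alpha> *\<^sub>R P + \<beta> *\<^sub>R R + \<gamma> *\<^sub>R F"
    unfolding \<kappa>_def \<alpha>_def \<beta>_def \<gamma>_def by (simp add: algebra_simps)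
  have "0 < \<kappa>"
    unfolding \<kappa>_def using \<open>s \<le> 1\<close> \<open>0 < a'\<close> \<open>0 < b'\<close> \<open>0 < c\<close> by (simp add: add_pos_nonneg)
  have "\<alpha> + \<beta> + \<gamma> = \<kappa>"
    unfolding \<kappa>_def \<alpha>_def \<beta>_def \<gamma>_def
    using \<open>a + b + c = 1\<close> \<open>a' + b' + c' = 1\<close> by algebra
  with \<open>0 < \<kappa>\<close> have "\<alpha> / \<kappa> + \<beta> / \<kappa> + \<gamma> / \<kappa> = 1"
    by (simp flip: add_divide_distrib)
  moreover have "Q = inverse \<kappa> *\<^sub>R (\<kappa> *\<^sub>R Q)"
    using \<open>0 < \<kappa>\<close> by simp
  then have "Q = (\<alpha> / \<kappa>) *\<^sub>R P + (\<beta> / \<kappa>) *\<^sub>R R + (\<gamma> / \<kappa>) *\<^sub>R F"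
    unfolding combination by (simp add: scaleR_add_right divide_inverse_commute)
  ultimately have "Q \<in> affine hull {P, R, F}"
    unfolding affine_hull_3 by blast
  with assms(1) show False ..
qed

text \<open>In the plane, let the angle from \<open>f\<close> counterclockwise to \<open>e\<close> be less than \<open>\<pi>\<close>, and let
  \<open>n\<^sub>e\<close>, \<open>n\<^sub>f\<close> be the unit normals of its sides pointing into the angle. If
  \<open>l e + x n\<^sub>e = l' f + x' n\<^sub>f\<close> with \<open>l, l' > 0\<close>, then \<open>x + x' > 0\<close>.\<close>
lemma offsets_from_angle_sides_sum_pos:
  fixes e1 e2 f1 f2 ne nf l l' x x' :: real
  assumes "ne\<^sup>2 = e1\<^sup>2 + e2\<^sup>2" "nf\<^sup>2 = f1\<^sup>2 + f2\<^sup>2" "0 < ne" "0 < nf"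
    and "0 < e2 * f1 - e1 * f2" "0 < l" "0 < l'"
    and "l * e1 + x * e2 / ne = l' * f1 - x' * f2 / nf"
    and "l * e2 - x * e1 / ne = l' * f2 + x' * f1 / nf"
  shows "0 < x + x'"
proof -
  define r where "r = e1 * f1 + e2 * f2"
  define D where "D = e2 * f1 - e1 * f2"
  have eqs: "l * e1 * ne * nf + x * e2 * nf = l' * f1 * ne * nf - x' * f2 * ne"
    "l * e2 * ne * nf - x * e1 * nf = l' * f2 * ne * nf + x' * f1 * ne"
    using assms(3,4,8,9) by (simp_all add: field_simps)
  have "(x + x') * (ne * nf + r) * (ne * nf) = (l * ne + l' * nf) * D * (ne * nf)"
    unfolding r_def D_def using eqs assms(1,2) by algebra
  then have key: "(x + x') * (ne * nf + r) = (l * ne + l' * nf) * D"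
    using assms(3,4) by simp
  have "(ne * nf)\<^sup>2 = r\<^sup>2 + D\<^sup>2"
    unfolding r_def D_def using assms(1,2) by algebra
  with assms(5) have "r\<^sup>2 < (ne * nf)\<^sup>2"
    unfolding D_def by (simp add: power2_eq_square)
  then have "- r < ne * nf"
    using assms(3,4) by (metis abs_less_iff abs_of_pos mult_pos_pos power2_abs power_less_imp_less_base abs_ge_zero)
  moreover have "0 < (x + x') * (ne * nf + r)"
    unfolding key D_def using assms(3-7) by (simp add: add_pos_pos)
  ultimately show ?thesis
    by (auto simp: zero_less_mult_iff)
qed

lemma sin_add_pos_of_equal_heights:
  fixes \<mu> \<nu> s t :: real
  assumes "0 \<le> \<mu>" "0 \<le> \<nu>" "0 < \<mu> + \<nu>" "0 < sin s" "0 < sin t"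
    and "\<mu> * sin s = \<nu> * sin t" and "0 < \<mu> * cos s + \<nu> * cos t"
  shows "0 < sin (s + t)"
proof -
  have "0 < \<mu> * sin s"
  proof (cases "\<mu> = 0")
    case True
    with assms(3,5,6) show ?thesis by simp
  qed (use assms(1,4) in simp)
  with assms(7) have "0 < (\<mu> * sin s) * (\<mu> * cos s + \<nu> * cos t)"
    by simp
  also have "\<dots> = \<mu> * \<nu> * sin (s + t)"
    unfolding sin_add using assms(6) by algebra
  finally show ?thesis
    using mult_nonneg_nonneg[OF assms(1,2)] by (auto simp: zero_less_mult_iff)
qed

lemma flap_wedges_meet_imp_sin_add_pos:
  assumes ccw: "ccw_in_xy_plane P Q R" and "dist P Q < 2" "dist Q R < 2" "0 < sin s" "0 < sin t"
    and X: "a *\<^sub>R (P - Q) + b *\<^sub>R (flap P Q s - Q) = c *\<^sub>R (R - Q) + d *\<^sub>R (flap Q R t - Q)"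
    and "0 \<le> a" "0 \<le> b" "0 \<le> c" "0 \<le> d" "0 < a + b" "0 < c + d" "0 < b + d"
  shows "0 < sin (s + t)"
proof -
  define e f where "e = P - Q" and "f = R - Q"
  define hs ht where "hs = sqrt (4 - (dist P Q)\<^sup>2) / 2" and "ht = sqrt (4 - (dist Q R)\<^sup>2) / 2"
  have "0 < hs" "0 < ht"
    unfolding hs_def ht_def using flap_radius_pos assms(2,3) by blast+
  have z: "P $ 3 = 0" "Q $ 3 = 0" "R $ 3 = 0" and D: "0 < e $ 2 * f $ 1 - e $ 1 * f $ 2"
    using ccw unfolding ccw_in_xy_plane_def e_def f_def by (simp_all add: cross_components algebra_simps)
  then have "e \<noteq> 0" "f \<noteq> 0"
    by auto
  have ez: "e $ 3 = 0" "f $ 3 = 0"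
    using z by (simp_all add: e_def f_def)
  have norms: "(norm e)\<^sup>2 = (e $ 1)\<^sup>2 + (e $ 2)\<^sup>2" "(norm f)\<^sup>2 = (f $ 1)\<^sup>2 + (f $ 2)\<^sup>2"
    unfolding norm_square_vec3 using z by (simp_all add: e_def f_def)
  have flaps: "flap P Q s - Q = (1/2) *\<^sub>R e + hs *\<^sub>R (cos s *\<^sub>R left_unit_normal P Q + sin s *\<^sub>R e_z)"
    "flap Q R t - Q = (1/2) *\<^sub>R f + ht *\<^sub>R (cos t *\<^sub>R left_unit_normal Q R + sin t *\<^sub>R e_z)"
    unfolding flap_def hs_def ht_def e_def f_def
    by (simp_all add: diff_add_eq[symmetric] midpoint_minus_left midpoint_minus_right)
  have normal_components:
    "left_unit_normal P Q $ 1 = e $ 2 / norm e" "left_unit_normal P Q $ 2 = - e $ 1 / norm e"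
    "left_unit_normal Q R $ 1 = - f $ 2 / norm f" "left_unit_normal Q R $ 2 = f $ 1 / norm f"
    unfolding left_unit_normal_components e_def f_def by (simp_all add: norm_minus_commute)
  have "(a + b / 2) * e $ 1 + (b * hs * cos s) * e $ 2 / norm e = (c + d / 2) * f $ 1 - (d * ht * cos t) * f $ 2 / norm f"
    "(a + b / 2) * e $ 2 - (b * hs * cos s) * e $ 1 / norm e = (c + d / 2) * f $ 2 + (d * ht * cos t) * f $ 1 / norm f"
    and heights: "b * hs * sin s = d * ht * sin t"
    using arg_cong[OF X, of "\<lambda>x. x $ 1"] arg_cong[OF X, of "\<lambda>x. x $ 2"] arg_cong[OF X, of "\<lambda>x. x $ 3"] z
    unfolding flaps e_def[symmetric] f_def[symmetric]
    by (simp_all add: normal_components left_unit_normal_components(3) ez algebra_simps)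
  then have "0 < b * hs * cos s + d * ht * cos t"
    using \<open>e \<noteq> 0\<close> \<open>f \<noteq> 0\<close> norms D assms(6-12)
    by (intro offsets_from_angle_sides_sum_pos[of "norm e" "e $ 1" "e $ 2" "norm f" "f $ 1" "f $ 2"]) auto
  moreover have "0 < b * hs + d * ht"
    using \<open>0 < b + d\<close> assms(8,10) \<open>0 < hs\<close> \<open>0 < ht\<close>
    by (cases "b = 0") (simp_all add: add_pos_nonneg)
  ultimately show ?thesis
    using heights assms(4,5,8,10) \<open>0 < hs\<close> \<open>0 < ht\<close>
    by (intro sin_add_pos_of_equal_heights[of "b * hs" "d * ht"]) simp_all
qed

lemma flap_crossing_imp_sin_add_pos:
  assumes "ccw_in_xy_plane P Q R" "dist P Q < 2" "dist Q R < 2" "0 < sin s" "0 < sin t"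
    and "closed_segment (flap Q R t) R \<inter> open_triangle P (flap P Q s) Q \<noteq> {}
       \<or> closed_segment P (flap P Q s) \<inter> open_triangle Q (flap Q R t) R \<noteq> {}"
  shows "0 < sin (s + t)"
  using assms(6)
proof
  assume "closed_segment (flap Q R t) R \<inter> open_triangle P (flap P Q s) Q \<noteq> {}"
  then obtain X where "X \<in> closed_segment (flap Q R t) R" "X \<in> open_triangle P (flap P Q s) Q"
    by blast
  then obtain u a b where "0 \<le> u" "u \<le> 1" "0 < a" "0 < b"
    "X - Q = (1 - u) *\<^sub>R (flap Q R t - Q) + u *\<^sub>R (R - Q)"
    "X - Q = a *\<^sub>R (P - Q) + b *\<^sub>R (flap P Q s - Q)"
    by (metis in_closed_segment_relative in_open_triangle_relative)
  then show ?thesis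
    by (intro flap_wedges_meet_imp_sin_add_pos[OF assms(1-5), of a b u "1 - u"]) auto
next
  assume "closed_segment P (flap P Q s) \<inter> open_triangle Q (flap Q R t) R \<noteq> {}"
  then obtain X where "X \<in> closed_segment P (flap P Q s)" "X \<in> open_triangle R (flap Q R t) Q"
    using open_triangle_commute by blast
  then obtain u a b where "0 \<le> u" "u \<le> 1" "0 < a" "0 < b"
    "X - Q = (1 - u) *\<^sub>R (P - Q) + u *\<^sub>R (flap P Q s - Q)"
    "X - Q = a *\<^sub>R (R - Q) + b *\<^sub>R (flap Q R t - Q)"
    by (metis in_closed_segment_relative in_open_triangle_relative)
  then show ?thesis
    by (intro flap_wedges_meet_imp_sin_add_pos[OF assms(1-5), of "1 - u" u a b]) auto
qed

lemma flap_crossings_one_way: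
  fixes A B C :: "real^3" and t1 t2 t3 :: real
  defines "F1 \<equiv> flap A B t1" and "F2 \<equiv> flap B C t2" and "F3 \<equiv> flap C A t3"
  assumes ccw: "ccw_in_xy_plane A B C" and d: "dist A B < 2" "dist B C < 2" "dist C A < 2"
    and sin1: "0 < sin t1"
    and T2: "closed_segment F2 C \<inter> open_triangle A F1 B \<noteq> {} \<or> closed_segment C F3 \<inter> open_triangle A F1 B \<noteq> {}"
    and T4: "closed_segment F3 A \<inter> open_triangle B F2 C \<noteq> {} \<or> closed_segment A F1 \<inter> open_triangle B F2 C \<noteq> {}"
    and T6: "closed_segment F1 B \<inter> open_triangle C F3 A \<noteq> {} \<or> closed_segment B F2 \<inter> open_triangle C F3 A \<noteq> {}"
  shows "0 < sin t2 \<and> 0 < sin t3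
    \<and> (closed_segment F2 C \<inter> open_triangle A F1 B \<noteq> {} \<or> closed_segment A F1 \<inter> open_triangle B F2 C \<noteq> {})
    \<and> (closed_segment F3 A \<inter> open_triangle B F2 C \<noteq> {} \<or> closed_segment B F2 \<inter> open_triangle C F3 A \<noteq> {})
    \<and> (closed_segment F1 B \<inter> open_triangle C F3 A \<noteq> {} \<or> closed_segment C F3 \<inter> open_triangle A F1 B \<noteq> {})"
proof -
  have ccw': "ccw_in_xy_plane B C A" "ccw_in_xy_plane C A B"
    using ccw ccw_in_xy_plane_rotate by blast+
  then have z: "A $ 3 = 0" "B $ 3 = 0" "C $ 3 = 0"
    unfolding ccw_in_xy_plane_def by simp_all
  have up_iff: "0 < F1 $ 3 \<longleftrightarrow> 0 < sin t1" "0 < F2 $ 3 \<longleftrightarrow> 0 < sin t2" "0 < F3 $ 3 \<longleftrightarrow> 0 < sin t3"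
    unfolding F1_def F2_def F3_def using z d by (simp_all add: flap_height_pos_iff)
  have notin1: "B \<notin> affine hull {A, C, F1}"
    using ccw_vertex_notin_affine_hull[OF ccw] up_iff(1) sin1 by simp
  have notin2: "C \<notin> affine hull {B, A, F2}" if "0 < F2 $ 3"
    using ccw_vertex_notin_affine_hull[OF ccw'(1)] that by simp
  have notin3: "A \<notin> affine hull {C, B, F3}" if "0 < F3 $ 3"
    using ccw_vertex_notin_affine_hull[OF ccw'(2)] that by simp
  show ?thesis
  proof (cases "closed_segment F2 C \<inter> open_triangle A F1 B \<noteq> {}")
    case True
    then have "0 < F2 $ 3"
      using crossing_height_pos[OF z(1,2,3)] up_iff(1) sin1 by (simp add: closed_segment_commute)
    moreover have "closed_segment F3 A \<inter> open_triangle B F2 C \<noteq> {}"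
      using T4 linked_crossings_impossible[OF notin1 True] by blast
    moreover from this have "0 < F3 $ 3"
      using crossing_height_pos[OF z(2,3,1)] \<open>0 < F2 $ 3\<close> by (simp add: closed_segment_commute)
    moreover from calculation have "closed_segment F1 B \<inter> open_triangle C F3 A \<noteq> {}"
      using T6 linked_crossings_impossible[OF notin2] by blast
    ultimately show ?thesis
      using True up_iff by blast
  next
    case False
    then have b2: "closed_segment C F3 \<inter> open_triangle A F1 B \<noteq> {}"
      using T2 by blast
    then have "0 < F3 $ 3"
      using crossing_height_pos[OF z(1,2,3)] up_iff(1) sin1 by simp
    moreover from this have "closed_segment B F2 \<inter> open_triangle C F3 A \<noteq> {}"
      using T6 linked_crossings_impossible[OF notin3] b2 by blast
    moreover from calculation have "0 < F2 $ 3"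
      using crossing_height_pos[OF z(3,1,2)] by simp
    moreover from calculation have "closed_segment A F1 \<inter> open_triangle B F2 C \<noteq> {}"
      using T4 linked_crossings_impossible[OF notin2] by blast
    ultimately show ?thesis
      using b2 up_iff by blast
  qed
qed

lemma flap_crossings_imp_sin_pos:
  fixes A B C :: "real^3" and t1 t2 t3 :: real
  defines "F1 \<equiv> flap A B t1" and "F2 \<equiv> flap B C t2" and "F3 \<equiv> flap C A t3"
  assumes ccw: "ccw_in_xy_plane A B C" and d: "dist A B < 2" "dist B C < 2" "dist C A < 2"
    and sin1: "0 < sin t1"
    and crossings:
      "closed_segment F2 C \<inter> open_triangle A F1 B \<noteq> {} \<or> closed_segment C F3 \<inter> open_triangle A F1 B \<noteq> {}"
      "closed_segment F3 A \<inter> open_triangle B F2 C \<noteq> {} \<or> closed_segment A F1 \<inter> open_triangle B F2 C \<noteq> {}"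
      "closed_segment F1 B \<inter> open_triangle C F3 A \<noteq> {} \<or> closed_segment B F2 \<inter> open_triangle C F3 A \<noteq> {}"
  shows "0 < sin t2 \<and> 0 < sin t3 \<and> 0 < sin (t1 + t2) \<and> 0 < sin (t2 + t3) \<and> 0 < sin (t3 + t1)"
proof -
  have ccw': "ccw_in_xy_plane B C A" "ccw_in_xy_plane C A B"
    using ccw ccw_in_xy_plane_rotate by blast+
  show ?thesis
    using flap_crossings_one_way[OF ccw d sin1 crossings[unfolded F1_def F2_def F3_def]]
      flap_crossing_imp_sin_add_pos[OF ccw d(1,2) sin1, of t2]
      flap_crossing_imp_sin_add_pos[OF ccw'(1) d(2,3), of t2 t3]
      flap_crossing_imp_sin_add_pos[OF ccw'(2) d(3) d(1) _ sin1, of t3]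
    unfolding F1_def F2_def F3_def by (simp add: dist_commute)
qed

section \<open>Action-angle coordinates in standard position\<close>

lemma standard_position_ccw:
  "standard_position w \<Longrightarrow> ccw_in_xy_plane (hv w 1) (hv w 3) (hv w 5)"
  unfolding standard_position_def ccw_in_xy_plane_def by (simp add: cross_components)

lemma aa_theta_flap:
  assumes "equilateral_hexagon w" "i \<in> {1, 2, 3}"
    and ccw: "ccw_in_xy_plane (hv w (2 * i - 1)) (hv w (2 * i + 1)) (hv w (2 * i + 3))"
    and "aa_d w i < 2"
  shows "0 \<le> aa_theta w i \<and> aa_theta w i < 2 * pi
    \<and> hv w (2 * i) = flap (hv w (2 * i - 1)) (hv w (2 * i + 1)) (aa_theta w i)"
proof -
  define P Q where "P = hv w (2 * i - 1)" and "Q = hv w (2 * i + 1)"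
  have "dist (hv w (2 * i - 1)) (hv w (2 * i - 1 + 1)) = 1" "dist (hv w (2 * i)) (hv w (2 * i + 1)) = 1"
    using assms(1,2) unfolding equilateral_hexagon_def by auto
  moreover have "2 * i - 1 + 1 = 2 * i"
    using assms(2) by auto
  ultimately have "dist (hv w (2 * i)) P = 1" "dist (hv w (2 * i)) Q = 1"
    unfolding P_def Q_def by (simp_all add: dist_commute)
  moreover have "P $ 3 = 0" "Q $ 3 = 0" "0 < dist P Q" "dist P Q < 2"
    using ccw assms(4) ccw_in_xy_plane_dist_pos unfolding P_def Q_def aa_d_def ccw_in_xy_plane_def
    by auto
  ultimately have unique: "\<exists>!\<theta>. 0 \<le> \<theta> \<and> \<theta> < 2 * pi \<and> hv w (2 * i) = flap P Q \<theta>"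
    by (intro flap_angle_unique)
  have "aa_u w i = left_unit_normal P Q"
    using left_unit_normal_toward_third_vertex[OF ccw]
    unfolding aa_u_def aa_m_def Let_def P_def Q_def left_unit_normal_def by simp
  then have "(THE \<theta>. 0 \<le> \<theta> \<and> \<theta> < 2 * pi \<and> hv w (2 * i) = flap P Q \<theta>) = aa_theta w i"
    unfolding aa_theta_def flap_def aa_m_def aa_d_def P_def Q_def by simp
  with theI'[OF unique] show ?thesis
    unfolding P_def Q_def by simp
qed

lemma standard_position_flaps:
  assumes "equilateral_hexagon w" "standard_position w" "aa_defined w"
  shows "ccw_in_xy_plane (w 1) (w 3) (w 5)"
    and "dist (w 1) (w 3) < 2" "dist (w 3) (w 5) < 2" "dist (w 5) (w 1) < 2"
    and "\<forall>i\<in>{1,2,3}. 0 \<le> aa_theta w i \<and> aa_theta w i < 2 * pi"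
    and "w 2 = flap (w 1) (w 3) (aa_theta w 1)" "w 4 = flap (w 3) (w 5) (aa_theta w 2)"
      "w 6 = flap (w 5) (w 1) (aa_theta w 3)"
proof -
  have idx: "2 * 1 = (2::nat)" "2 - 1 = (1::nat)" "2 + 1 = (3::nat)" "2 + 3 = (5::nat)"
    "2 * 2 = (4::nat)" "4 - 1 = (3::nat)" "4 + 1 = (5::nat)" "4 + 3 = (7::nat)"
    "2 * 3 = (6::nat)" "6 - 1 = (5::nat)" "6 + 1 = (7::nat)" "6 + 3 = (9::nat)"
    by simp_all
  show ccw: "ccw_in_xy_plane (w 1) (w 3) (w 5)"
    using standard_position_ccw[OF assms(2)] unfolding hv_eval .
  then have ccw': "ccw_in_xy_plane (w 3) (w 5) (w 1)" "ccw_in_xy_plane (w 5) (w 1) (w 3)"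
    using ccw_in_xy_plane_rotate by blast+
  have "aa_d w 1 < 2" "aa_d w 2 < 2" "aa_d w 3 < 2"
    using assms(3) unfolding aa_defined_def by blast+
  then show d: "dist (w 1) (w 3) < 2" "dist (w 3) (w 5) < 2" "dist (w 5) (w 1) < 2"
    unfolding aa_d_def idx hv_eval .
  have "0 \<le> aa_theta w 1 \<and> aa_theta w 1 < 2 * pi \<and> w 2 = flap (w 1) (w 3) (aa_theta w 1)"
    using aa_theta_flap[OF assms(1), of 1] ccw d unfolding aa_d_def idx hv_eval by simp
  moreover have "0 \<le> aa_theta w 2 \<and> aa_theta w 2 < 2 * pi \<and> w 4 = flap (w 3) (w 5) (aa_theta w 2)"
    using aa_theta_flap[OF assms(1), of 2] ccw' d unfolding aa_d_def idx hv_eval by simp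
  moreover have "0 \<le> aa_theta w 3 \<and> aa_theta w 3 < 2 * pi \<and> w 6 = flap (w 5) (w 1) (aa_theta w 3)"
    using aa_theta_flap[OF assms(1), of 3] ccw' d unfolding aa_d_def idx hv_eval by simp
  ultimately show "\<forall>i\<in>{1,2,3}. 0 \<le> aa_theta w i \<and> aa_theta w i < 2 * pi"
    and "w 2 = flap (w 1) (w 3) (aa_theta w 1)" "w 4 = flap (w 3) (w 5) (aa_theta w 2)"
      "w 6 = flap (w 5) (w 1) (aa_theta w 3)"
    by auto
qed

lemma sin_pos_imp_less_pi:
  assumes "0 \<le> x" "x < 2 * pi" "0 < sin x"
  shows "0 < x \<and> x < pi"
  using assms sin_le_zero[of x] by (cases "x = 0") (auto simp: not_less[symmetric])

lemma sin_add_pos_imp_add_less_pi: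
  assumes "0 < x" "x < pi" "0 < y" "y < pi" "0 < sin (x + y)"
  shows "x + y < pi"
  using assms sin_le_zero[of "x + y"] by (auto simp: not_less[symmetric])

lemma standard_hexagon_flap_angles:
  assumes "equilateral_hexagon w" "standard_position w" "aa_defined w" "JCC w = (1, 1)"
  defines "\<theta> \<equiv> aa_theta w"
  shows "(\<forall>i\<in>{1,2,3}. 0 < \<theta> i \<and> \<theta> i < pi)
    \<and> \<theta> 1 + \<theta> 2 < pi \<and> \<theta> 1 + \<theta> 3 < pi \<and> \<theta> 2 + \<theta> 3 < pi"
proof -
  note ccw = standard_position_flaps(1)[OF assms(1-3)]
    and d = standard_position_flaps(2-4)[OF assms(1-3)]
    and range = standard_position_flaps(5)[OF assms(1-3), folded \<theta>_def]
    and flaps = standard_position_flaps(6-8)[OF assms(1-3), folded \<theta>_def]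
  have "sgn (w 2 $ 3) = 1"
    using JCC_eq_1_1D(1)[OF assms(4)] ccw_in_xy_plane_sgn_triple_product[OF ccw]
    unfolding curl_def hv_eval by simp
  then have "0 < sin (\<theta> 1)"
    using flap_height_pos_iff[of "w 1" "w 3" "\<theta> 1"] ccw d(1) unfolding ccw_in_xy_plane_def flaps
    by (simp add: sgn_1_pos)
  moreover have "closed_segment (w 4) (w 5) \<inter> open_triangle (w 1) (w 2) (w 3) \<noteq> {}
      \<or> closed_segment (w 5) (w 6) \<inter> open_triangle (w 1) (w 2) (w 3) \<noteq> {}"
    "closed_segment (w 6) (w 1) \<inter> open_triangle (w 3) (w 4) (w 5) \<noteq> {}
      \<or> closed_segment (w 1) (w 2) \<inter> open_triangle (w 3) (w 4) (w 5) \<noteq> {}"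
    "closed_segment (w 2) (w 3) \<inter> open_triangle (w 5) (w 6) (w 1) \<noteq> {}
      \<or> closed_segment (w 3) (w 4) \<inter> open_triangle (w 5) (w 6) (w 1) \<noteq> {}"
    using Delta_nonzero_imp_crossing[of 2 w] Delta_nonzero_imp_crossing[of 4 w]
      Delta_nonzero_imp_crossing[of 6 w] JCC_eq_1_1D(2-4)[OF assms(4)]
    unfolding hedge_def by (simp_all add: hv_eval)
  ultimately have sin: "0 < sin (\<theta> 1)" "0 < sin (\<theta> 2)" "0 < sin (\<theta> 3)"
      "0 < sin (\<theta> 1 + \<theta> 2)" "0 < sin (\<theta> 2 + \<theta> 3)" "0 < sin (\<theta> 1 + \<theta> 3)"
    using flap_crossings_imp_sin_pos[OF ccw d, of "\<theta> 1" "\<theta> 2" "\<theta> 3"] unfolding flaps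
    by (simp_all add: add.commute)
  have "0 < \<theta> i \<and> \<theta> i < pi" if "i \<in> {1, 2, 3}" for i
    using sin_pos_imp_less_pi range sin(1-3) that by auto
  with sin(4-6) show ?thesis
    using sin_add_pos_imp_add_less_pi by auto
qed

theorem mainTheorem6:
  fixes v :: "nat \<Rightarrow> real^3" and R :: "real^3^3" and t :: "real^3"
  assumes "equilateral_hexagon v" and "embedded_hexagon v"
    and "is_rotation3 R"
    and "standard_position (\<lambda>j. R *v v j + t)"
    and "aa_defined (\<lambda>j. R *v v j + t)"
    and "JCC v = (1, 1)"
  shows "(\<forall>i\<in>{1,2,3}. 0 < aa_theta (\<lambda>j. R *v v j + t) i \<and> aa_theta (\<lambda>j. R *v v j + t) i < pi)
       \<and> aa_theta (\<lambda>j. R *v v j + t) 1 + aa_theta (\<lambda>j. R *v v j + t) 2 < pi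
       \<and> aa_theta (\<lambda>j. R *v v j + t) 1 + aa_theta (\<lambda>j. R *v v j + t) 3 < pi
       \<and> aa_theta (\<lambda>j. R *v v j + t) 2 + aa_theta (\<lambda>j. R *v v j + t) 3 < pi"
proof -
  let ?w = "\<lambda>j. R *v v j + t"
  have "equilateral_hexagon ?w"
    using equilateral_hexagon_rigid_motion assms(1,3) by blast
  moreover have "JCC ?w = (1, 1)"
    using JCC_rigid_motion[OF assms(3)] assms(6) by simp
  ultimately show ?thesis
    using standard_hexagon_flap_angles assms(4,5) by blast
qed


end
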